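(* Let $\theta>0$, let $L\ge 1$ be an integer, let $K(x,y)=\exp(-\theta|x-y|)$ on $[0,1]$, and let $\mathbf U=\{0\cdot 2^{-L},1\cdot 2^{-L},\dots,2^L\cdot 2^{-L}\}$ be the set of $M=2^L+1$ inducing points (written as a vector in some fixed order). Then there exists an invertible $M\times M$ matrix $\mathbf P_{\mathbf U}$ with $K(\mathbf U,\mathbf U)=\mathbf P_{\mathbf U}\mathbf P_{\mathbf U}^\top$ such that, for all $x\in[0,1]$, the row vector $\phi(x):=K(x,\mathbf U)\mathbf P_{\mathbf U}^{-\top}\in\mathbb R^{1\times M}$ has as its entries exactly the $M$ functions $\psi_{01}(x),\psi_{02}(x)$ and $\psi_{lm}(x)$ for $l=1,\dots,L$, $m\in\{1,3,\dots,2^l-1\}$ (defined in the context). Consequently, for every function $f$ on $[0,1]$, the inducing-point approximation satisfies $K(x,\mathbf U)[K(\mathbf U,\mathbf U)]^{-1}f(\mathbf U)=\phi(x)\mathbf w$ with $\mathbf w:=\mathbf P_{\mathbf U}^{-1}f(\mathbf U)$, and if $f$ is a centered Gaussian process with covariance $K$ then $\mathbf w\sim\mathcal N(\mathbf 0,\mathbf I_M)$. Moreover, for every $l\ge1$ and odd $m$, $\psi_{lm}$ vanishes outside $[(m-1)2^{-l},(m+1)2^{-l}]$.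
   Context: $K(x,\mathbf U)$ denotes the row vector $(K(x,u))_{u\in\mathbf U}$ and $K(\mathbf U,\mathbf U)$ the matrix $(K(u,u'))_{u,u'\in\mathbf U}$; $\mathbf P^{-\top}=(\mathbf P^{-1})^\top$. The functions on $[0,1]$ are $\psi_{01}(x)=\dfrac{e^{-\theta x}+e^{-\theta(1-x)}}{\sqrt{2(1+e^{-\theta})}}$, $\psi_{02}(x)=\dfrac{e^{-\theta x}-e^{-\theta(1-x)}}{\sqrt{2(1-e^{-\theta})}}$, and for $l\ge1$, odd $m\in\{1,3,\dots,2^l-1\}$: $\psi_{lm}(x)=\sqrt{\dfrac{2}{\sinh(2^{1-l}\theta)}}\sinh\big(\theta(x-(m-1)2^{-l})\big)$ if $(m-1)2^{-l}\le x\le m2^{-l}$; $\psi_{lm}(x)=\sqrt{\dfrac{2}{\sinh(2^{1-l}\theta)}}\sinh\big(\theta((m+1)2^{-l}-x)\big)$ if $m2^{-l}\le x\le (m+1)2^{-l}$; and $\psi_{lm}(x)=0$ otherwise. *)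

theory Defs
  imports "HOL-Probability.Probability" "Jordan_Normal_Form.Matrix"
begin

definition expK :: "real \<Rightarrow> real \<Rightarrow> real \<Rightarrow> real" where
  "expK \<theta> x y = exp (- \<theta> * \<bar>x - y\<bar>)"

definition ipt :: "nat \<Rightarrow> nat \<Rightarrow> real" where
  "ipt L i = real i / 2 ^ L"

definition nU :: "nat \<Rightarrow> nat" where
  "nU L = 2 ^ L + 1"

definition KUU :: "real \<Rightarrow> nat \<Rightarrow> real mat" where
  "KUU \<theta> L = mat (nU L) (nU L) (\<lambda>(i,j). expK \<theta> (ipt L i) (ipt L j))"

definition KxU :: "real \<Rightarrow> nat \<Rightarrow> real \<Rightarrow> real mat" where
  "KxU \<theta> L x = mat 1 (nU L) (\<lambda>(_,j). expK \<theta> x (ipt L j))"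

definition fU :: "nat \<Rightarrow> (real \<Rightarrow> real) \<Rightarrow> real vec" where
  "fU L f = vec (nU L) (\<lambda>i. f (ipt L i))"

definition mat_inv :: "real mat \<Rightarrow> real mat" where
  "mat_inv A = (SOME B. inverts_mat A B \<and> inverts_mat B A)"

(* the functions psi_{lm}; index (0,1), (0,2) gives psi_01, psi_02 *)
definition psi :: "real \<Rightarrow> nat \<times> nat \<Rightarrow> real \<Rightarrow> real" where
  "psi \<theta> lm x = (case lm of (l, m) \<Rightarrow>
     if l = 0 then
       (if m = 1 then (exp (- \<theta> * x) + exp (- \<theta> * (1 - x))) / sqrt (2 * (1 + exp (- \<theta>)))
        else (exp (- \<theta> * x) - exp (- \<theta> * (1 - x))) / sqrt (2 * (1 - exp (- \<theta>))))
     else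
       (if (real m - 1) / 2 ^ l \<le> x \<and> x \<le> real m / 2 ^ l then
          sqrt (2 / sinh ((2 / 2 ^ l) * \<theta>)) * sinh (\<theta> * (x - (real m - 1) / 2 ^ l))
        else if real m / 2 ^ l \<le> x \<and> x \<le> (real m + 1) / 2 ^ l then
          sqrt (2 / sinh ((2 / 2 ^ l) * \<theta>)) * sinh (\<theta> * ((real m + 1) / 2 ^ l - x))
        else 0))"

definition psi_index :: "nat \<Rightarrow> (nat \<times> nat) set" where
  "psi_index L = {(0,1), (0,2)} \<union> {(l, m). 1 \<le> l \<and> l \<le> L \<and> odd m \<and> m < 2 ^ l}"

definition normal_measure :: "real \<Rightarrow> real \<Rightarrow> real measure" where
  "normal_measure \<mu> v = (if v = 0 then return borel \<mu> else density lborel (normal_density \<mu> (sqrt v)))"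

(* X is an n-dimensional centred Gaussian random vector with covariance Sigma:
   every linear functional a.X is N(0, a^T Sigma a) (Cramer-Wold definition) *)
definition centered_mvn :: "'w measure \<Rightarrow> ('w \<Rightarrow> real vec) \<Rightarrow> nat \<Rightarrow> real mat \<Rightarrow> bool" where
  "centered_mvn \<Omega> X n \<Sigma> \<longleftrightarrow>
     (\<forall>\<omega>\<in>space \<Omega>. dim_vec (X \<omega>) = n) \<and>
     (\<forall>a. dim_vec a = n \<longrightarrow>
        (\<lambda>\<omega>. scalar_prod a (X \<omega>)) \<in> borel_measurable \<Omega> \<and>
        distr \<Omega> borel (\<lambda>\<omega>. scalar_prod a (X \<omega>)) = normal_measure 0 (scalar_prod a (\<Sigma> *\<^sub>v a)))"

definition centered_GP :: "'w measure \<Rightarrow> ('w \<Rightarrow> real \<Rightarrow> real) \<Rightarrow> (real \<Rightarrow> real \<Rightarrow> real) \<Rightarrow> bool" where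
  "centered_GP \<Omega> f C \<longleftrightarrow>
     (\<forall>ts. set ts \<subseteq> {0..1} \<longrightarrow>
        centered_mvn \<Omega> (\<lambda>\<omega>. vec (length ts) (\<lambda>i. f \<omega> (ts ! i))) (length ts)
          (mat (length ts) (length ts) (\<lambda>(i,j). C (ts ! i) (ts ! j))))"

end

(*
  For fixed x the kernel y \<mapsto> exp(-\<theta>|x - y|) solves f'' = \<theta>^2 f away from y = x, so on an
  interval [c - h, c + h] not containing x it satisfies the midpoint rule
  2 cosh(\<theta> h) f(c) = f(c - h) + f(c + h); on the interval containing x the defect is twice a
  sinh-shaped hat function centred at c, evaluated at x.  Every psi of level at most n solves the same
  equation between neighbouring grid points of level n, and psi_{n+1,m} is exactly that hat function,
  normalised so that psi_{n+1,m}(x) psi_{n+1,m}(c) = hat(x) / cosh(\<theta> h).  Induction on the level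
  therefore gives \<Sum>_i psi_i(x) psi_i(U_k) = K(x, U_k) on [0,1] for every inducing point U_k, that is
  K(x, U) = \<phi>(x) P^T with P = (psi_i(U_k))_{k,i}, and in particular K(U, U) = P P^T.
  P is invertible because the translates exp(-\<theta>|x - U_k|) are linearly independent on [0,1].
  The remaining claims are linear algebra: K(U,U)^-1 = P^-T P^-1, and P^-1 f(U) is Gaussian with
  covariance P^-1 K(U,U) P^-T = I.
*)
theory Submission
  imports Defs "Jordan_Normal_Form.Determinant"
begin

section \<open>Hyperbolic interpolation and hat functions\<close>

(* f agrees on S with a solution of f'' = \<theta>^2 f *)
definition hyperbolic_on :: "real \<Rightarrow> real set \<Rightarrow> (real \<Rightarrow> real) \<Rightarrow> bool" where
  "hyperbolic_on \<theta> S f \<longleftrightarrow> (\<exists>A B. \<forall>y\<in>S. f y = A * exp (\<theta> * y) + B * exp (- (\<theta> * y)))"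

lemma hyperbolic_on_cong:
  "(\<And>y. y \<in> S \<Longrightarrow> f y = g y) \<Longrightarrow> hyperbolic_on \<theta> S g \<Longrightarrow> hyperbolic_on \<theta> S f"
  unfolding hyperbolic_on_def by simp

lemma hyperbolic_on_sum:
  assumes "\<And>i. i \<in> I \<Longrightarrow> hyperbolic_on \<theta> S (f i)"
  shows "hyperbolic_on \<theta> S (\<lambda>y. \<Sum>i\<in>I. c i * f i y)"
proof -
  obtain A B where AB: "\<And>i y. i \<in> I \<Longrightarrow> y \<in> S \<Longrightarrow> f i y = A i * exp (\<theta> * y) + B i * exp (- (\<theta> * y))"
    using assms unfolding hyperbolic_on_def by metis
  have "(\<Sum>i\<in>I. c i * f i y) = (\<Sum>i\<in>I. c i * A i) * exp (\<theta> * y) + (\<Sum>i\<in>I. c i * B i) * exp (- (\<theta> * y))"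
    if "y \<in> S" for y
    using that by (simp add: AB distrib_left sum.distrib sum_distrib_right mult.assoc)
  then show ?thesis unfolding hyperbolic_on_def by blast
qed

lemma hyperbolic_on_cmult:
  assumes "hyperbolic_on \<theta> S f"
  shows "hyperbolic_on \<theta> S (\<lambda>y. C * f y)"
proof -
  obtain A B where "\<And>y. y \<in> S \<Longrightarrow> f y = A * exp (\<theta> * y) + B * exp (- (\<theta> * y))"
    using assms unfolding hyperbolic_on_def by blast
  then show ?thesis unfolding hyperbolic_on_def
    by (intro exI[of _ "C * A"] exI[of _ "C * B"]) (simp add: distrib_left)
qed

lemma hyperbolic_on_sinh: "hyperbolic_on \<theta> S (\<lambda>y. C * sinh (\<theta> * (y - s)))"
proof -
  have "C * sinh (\<theta> * (y - s))
      = (C * exp (- (\<theta> * s)) / 2) * exp (\<theta> * y) + (- C * exp (\<theta> * s) / 2) * exp (- (\<theta> * y))" for y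
    by (simp add: sinh_def right_diff_distrib exp_diff exp_minus field_simps)
  then show ?thesis unfolding hyperbolic_on_def by blast
qed

lemma hyperbolic_on_midpoint:
  assumes "hyperbolic_on \<theta> {c - h..c + h} f" "h \<ge> 0"
  shows "2 * cosh (\<theta> * h) * f c = f (c - h) + f (c + h)"
proof -
  obtain A B where AB: "\<And>y. y \<in> {c - h..c + h} \<Longrightarrow> f y = A * exp (\<theta> * y) + B * exp (- (\<theta> * y))"
    using assms(1) unfolding hyperbolic_on_def by blast
  show ?thesis using assms(2)
    by (simp add: AB cosh_def right_diff_distrib distrib_left exp_add exp_diff exp_minus
        field_simps)
qed

definition sinh_hat :: "real \<Rightarrow> real \<Rightarrow> real \<Rightarrow> real \<Rightarrow> real" where
  "sinh_hat \<theta> c h x =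
     (if c - h \<le> x \<and> x \<le> c then sinh (\<theta> * (x - (c - h)))
      else if c \<le> x \<and> x \<le> c + h then sinh (\<theta> * (c + h - x)) else 0)"

lemma sinh_hat_eq_0: "h \<ge> 0 \<Longrightarrow> x \<le> c - h \<or> c + h \<le> x \<Longrightarrow> sinh_hat \<theta> c h x = 0"
  unfolding sinh_hat_def by auto

lemma sinh_hat_left: "c - h \<le> x \<Longrightarrow> x \<le> c \<Longrightarrow> sinh_hat \<theta> c h x = sinh (\<theta> * (x - (c - h)))"
  unfolding sinh_hat_def by auto

lemma sinh_hat_right: "c \<le> x \<Longrightarrow> x \<le> c + h \<Longrightarrow> sinh_hat \<theta> c h x = sinh (\<theta> * (c + h - x))"
  unfolding sinh_hat_def by auto

lemma hyperbolic_on_sinh_hat: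
  assumes "h \<ge> 0" and breaks: "\<And>t. t \<in> {c - h, c, c + h} \<Longrightarrow> t \<le> a \<or> b \<le> t"
  shows "hyperbolic_on \<theta> {a..b} (sinh_hat \<theta> c h)"
proof -
  have reflect: "sinh (\<theta> * (c + h - y)) = - 1 * sinh (\<theta> * (y - (c + h)))" for y
    by (metis minus_diff_eq mult_minus_left mult_minus_right mult_1 sinh_minus)
  consider "b \<le> c - h" | "c - h \<le> a" "b \<le> c" | "c \<le> a" "b \<le> c + h" | "c + h \<le> a"
    using breaks by (metis insertCI linorder_linear order_trans)
  then show ?thesis
  proof cases
    case 1
    then show ?thesis
      by (intro hyperbolic_on_cong[OF _ hyperbolic_on_sinh[of \<theta> _ 0 0]])
        (simp add: sinh_hat_eq_0 assms)
  next
    case 2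
    then show ?thesis
      by (intro hyperbolic_on_cong[OF _ hyperbolic_on_sinh[of \<theta> _ 1 "c - h"]])
        (simp add: sinh_hat_left)
  next
    case 3
    then show ?thesis
      by (intro hyperbolic_on_cong[OF _ hyperbolic_on_sinh[of \<theta> _ "- 1" "c + h"]])
        (simp add: sinh_hat_right reflect)
  next
    case 4
    then show ?thesis
      by (intro hyperbolic_on_cong[OF _ hyperbolic_on_sinh[of \<theta> _ 0 0]])
        (simp add: sinh_hat_eq_0 assms)
  qed
qed

lemma exp_abs_three_point:
  fixes \<theta> c h x :: real
  assumes "h \<ge> 0"
  shows "2 * cosh (\<theta> * h) * exp (- \<theta> * \<bar>x - c\<bar>)
    = exp (- \<theta> * \<bar>x - (c - h)\<bar>) + exp (- \<theta> * \<bar>x - (c + h)\<bar>) + 2 * sinh_hat \<theta> c h x"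
proof -
  consider "x \<le> c - h" | "c - h \<le> x" "x \<le> c" | "c \<le> x" "x \<le> c + h" | "c + h \<le> x"
    by linarith
  then show ?thesis
  proof cases
    case 1
    then have "\<bar>x - c\<bar> = c - x" "\<bar>x - (c - h)\<bar> = c - h - x" "\<bar>x - (c + h)\<bar> = c + h - x"
      using assms by auto
    then show ?thesis using 1 assms
      by (simp add: sinh_hat_eq_0 cosh_def exp_add exp_diff exp_minus field_simps)
  next
    case 2
    then have "\<bar>x - c\<bar> = c - x" "\<bar>x - (c - h)\<bar> = x - (c - h)" "\<bar>x - (c + h)\<bar> = c + h - x"
      using assms by auto
    then show ?thesis using 2
      by (simp add: sinh_hat_left cosh_def sinh_def exp_add exp_diff exp_minus field_simps)
  next
    case 3
    then have "\<bar>x - c\<bar> = x - c" "\<bar>x - (c - h)\<bar> = x - (c - h)" "\<bar>x - (c + h)\<bar> = c + h - x"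
      using assms by auto
    then show ?thesis using 3
      by (simp add: sinh_hat_right cosh_def sinh_def exp_add exp_diff exp_minus field_simps)
  next
    case 4
    then have "\<bar>x - c\<bar> = x - c" "\<bar>x - (c - h)\<bar> = x - (c - h)" "\<bar>x - (c + h)\<bar> = x - (c + h)"
      using assms by auto
    then show ?thesis using 4 assms
      by (simp add: sinh_hat_eq_0 cosh_def exp_add exp_diff exp_minus field_simps)
  qed
qed

lemma psi_eq_sinh_hat:
  assumes "1 \<le> l"
  shows "psi \<theta> (l, m) x
    = sqrt (2 / sinh ((2 / 2 ^ l) * \<theta>)) * sinh_hat \<theta> (real m / 2 ^ l) (1 / 2 ^ l) x"
proof -
  have breaks: "(real m - 1) / 2 ^ l = real m / 2 ^ l - 1 / (2::real) ^ l"
    "(real m + 1) / 2 ^ l = real m / 2 ^ l + 1 / (2::real) ^ l"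
    by (simp_all only: diff_divide_distrib add_divide_distrib)
  have "l \<noteq> 0" using assms by simp
  then show ?thesis unfolding psi_def sinh_hat_def breaks prod.case if_not_P[OF \<open>l \<noteq> 0\<close>]
    by (simp only: if_distrib[of "\<lambda>v. sqrt (2 / sinh (2 / 2 ^ l * \<theta>)) * v"] mult_zero_right)
qed

lemma psi_eq_0_outside:
  assumes "1 \<le> l" "x \<notin> {(real m - 1) / 2 ^ l .. (real m + 1) / 2 ^ l}"
  shows "psi \<theta> (l, m) x = 0"
proof -
  have "(real m - 1) / 2 ^ l \<le> real m / (2::real) ^ l"
    "real m / 2 ^ l \<le> (real m + 1) / (2::real) ^ l"
    by (simp_all add: divide_right_mono)
  then show ?thesis using assms unfolding psi_def by auto
qed

lemma psi_grid_eq_0: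
  assumes "1 \<le> l" "k \<noteq> m"
  shows "psi \<theta> (l, m) (real k / 2 ^ l) = 0"
proof -
  have "real k \<le> real m - 1 \<or> real m + 1 \<le> real k" using assms(2) by linarith
  then have "real k / 2 ^ l \<le> real m / 2 ^ l - 1 / 2 ^ l
      \<or> real m / 2 ^ l + 1 / 2 ^ l \<le> real k / 2 ^ l"
    by (auto simp: divide_right_mono simp flip: diff_divide_distrib add_divide_distrib)
  then show ?thesis by (simp add: psi_eq_sinh_hat[OF assms(1)] sinh_hat_eq_0)
qed

lemma hyperbolic_on_psi_base: "hyperbolic_on \<theta> S (psi \<theta> (0, m))"
proof -
  define s1 where "s1 = sqrt (2 * (1 + exp (- \<theta>)))"
  define s2 where "s2 = sqrt (2 * (1 - exp (- \<theta>)))"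
  have e: "exp (- \<theta> * (1 - y)) = exp (- \<theta>) * exp (\<theta> * y)" for y
    by (simp add: exp_add[symmetric] algebra_simps)
  have "psi \<theta> (0, m) y = (if m = 1 then exp (- \<theta>) / s1 else - exp (- \<theta>) / s2) * exp (\<theta> * y)
      + (if m = 1 then 1 / s1 else 1 / s2) * exp (- (\<theta> * y))" for y
    unfolding psi_def s1_def s2_def e by (simp add: add_divide_distrib diff_divide_distrib)
  then show ?thesis unfolding hyperbolic_on_def by blast
qed

lemma dyadic_not_between:
  assumes "l \<le> n"
  shows "real q / 2 ^ l \<le> real j / 2 ^ n \<or> real (Suc j) / 2 ^ n \<le> real q / (2::real) ^ l"
proof -
  have "(2::real) ^ n = 2 ^ l * 2 ^ (n - l)"
    using assms by (simp flip: power_add)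
  then have q: "real q / 2 ^ l = real (q * 2 ^ (n - l)) / (2::real) ^ n"
    by simp
  consider "q * 2 ^ (n - l) \<le> j" | "Suc j \<le> q * 2 ^ (n - l)" by linarith
  then show ?thesis unfolding q
    by cases (auto intro: divide_right_mono simp del: of_nat_mult of_nat_power of_nat_Suc)
qed

lemma hyperbolic_on_psi_grid:
  assumes "i \<in> psi_index n"
  shows "hyperbolic_on \<theta> {real j / 2 ^ n .. real (Suc j) / 2 ^ n} (psi \<theta> i)"
proof (cases "fst i = 0")
  case True
  then show ?thesis by (metis hyperbolic_on_psi_base prod.collapse)
next
  case False
  then obtain l m where i: "i = (l, m)" "1 \<le> l" "l \<le> n" "odd m"
    using assms unfolding psi_index_def by auto
  have m: "real m - 1 = real (m - 1)" "real m + 1 = real (Suc m)"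
    using odd_pos[OF \<open>odd m\<close>] by (simp_all add: of_nat_diff)
  have "t \<le> real j / 2 ^ n \<or> real (Suc j) / 2 ^ n \<le> t"
    if "t \<in> {real m / 2 ^ l - 1 / 2 ^ l, real m / 2 ^ l, real m / 2 ^ l + 1 / 2 ^ l}" for t
    using that dyadic_not_between[OF \<open>l \<le> n\<close>]
    by (auto simp flip: diff_divide_distrib add_divide_distrib simp: m simp del: of_nat_Suc)
  then show ?thesis
    unfolding i psi_eq_sinh_hat[OF \<open>1 \<le> l\<close>, abs_def]
    by (intro hyperbolic_on_cmult hyperbolic_on_sinh_hat) auto
qed

lemma odd_less_two_power_eq_image: "{m::nat. odd m \<and> m < 2 ^ Suc n} = (\<lambda>k. 2 * k + 1) ` {..<2 ^ n}"
proof (intro equalityI subsetI)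
  fix m :: nat assume "m \<in> {m. odd m \<and> m < 2 ^ Suc n}"
  then have "m = 2 * (m div 2) + 1" "m div 2 < 2 ^ n" by auto
  then show "m \<in> (\<lambda>k. 2 * k + 1) ` {..<2 ^ n}" by blast
qed auto

lemma psi_index_Suc: "psi_index (Suc n) = psi_index n \<union> Pair (Suc n) ` {m. odd m \<and> m < 2 ^ Suc n}"
  unfolding psi_index_def by (auto simp: le_Suc_eq)

lemma finite_psi_index: "finite (psi_index n)"
  unfolding psi_index_def
  by (rule finite_subset[of _ "{..n} \<times> {..<2 ^ n + 3}"])
    (auto dest: less_le_trans[OF _ power_increasing[of _ n "2::nat"]])

lemma psi_index_0: "psi_index 0 = {(0, 1), (0, 2)}"
  unfolding psi_index_def by auto

lemma card_psi_index: "card (psi_index n) = nU n"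
proof (induction n)
  case 0
  then show ?case unfolding psi_index_0 nU_def by simp
next
  case (Suc n)
  have "inj_on (\<lambda>k. 2 * k + 1) {..<(2::nat) ^ n}" by (auto simp: inj_on_def)
  then have "card {m::nat. odd m \<and> m < 2 ^ Suc n} = 2 ^ n"
    unfolding odd_less_two_power_eq_image by (simp add: card_image)
  moreover have "psi_index n \<inter> Pair (Suc n) ` {m. odd m \<and> m < 2 ^ Suc n} = {}"
    unfolding psi_index_def by auto
  ultimately show ?case
    using Suc.IH unfolding psi_index_Suc nU_def
    by (simp add: card_Un_disjoint finite_psi_index card_image inj_on_def)
qed

section \<open>The kernel expansion on the dyadic grid\<close>

definition psi_kernel :: "real \<Rightarrow> nat \<Rightarrow> real \<Rightarrow> real \<Rightarrow> real" where
  "psi_kernel \<theta> n x y = (\<Sum>i\<in>psi_index n. psi \<theta> i x * psi \<theta> i y)"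

lemma psi_kernel_Suc:
  "psi_kernel \<theta> (Suc n) x y
    = psi_kernel \<theta> n x y + (\<Sum>m | odd m \<and> m < 2 ^ Suc n. psi \<theta> (Suc n, m) x * psi \<theta> (Suc n, m) y)"
proof -
  have "psi_index n \<inter> Pair (Suc n) ` {m. odd m \<and> m < 2 ^ Suc n} = {}"
    unfolding psi_index_def by auto
  then show ?thesis
    unfolding psi_kernel_def psi_index_Suc
    by (simp add: sum.union_disjoint finite_psi_index sum.reindex inj_on_def)
qed

lemma psi_level_sum_grid:
  "(\<Sum>m | odd m \<and> m < 2 ^ Suc n. psi \<theta> (Suc n, m) x * psi \<theta> (Suc n, m) (real k / 2 ^ Suc n))
    = (if odd k \<and> k < 2 ^ Suc n
       then psi \<theta> (Suc n, k) x * psi \<theta> (Suc n, k) (real k / 2 ^ Suc n) else 0)"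
proof -
  have "(\<Sum>m | odd m \<and> m < 2 ^ Suc n. psi \<theta> (Suc n, m) x * psi \<theta> (Suc n, m) (real k / 2 ^ Suc n))
      = (\<Sum>m | odd m \<and> m < 2 ^ Suc n.
          if m = k then psi \<theta> (Suc n, m) x * psi \<theta> (Suc n, m) (real k / 2 ^ Suc n) else 0)"
    by (intro sum.cong) (auto simp: psi_grid_eq_0 simp del: power_Suc)
  then show ?thesis by (simp add: sum.delta')
qed

lemma psi_kernel_0_ends:
  assumes "\<theta> > 0"
  shows "psi_kernel \<theta> 0 x 0 = exp (- \<theta> * x)" "psi_kernel \<theta> 0 x 1 = exp (- \<theta> * (1 - x))"
proof -
  define s1 where "s1 = sqrt (2 * (1 + exp (- \<theta>)))"
  define s2 where "s2 = sqrt (2 * (1 - exp (- \<theta>)))"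
  have "exp (- \<theta>) < 1" using assms by simp
  then have pos: "1 + exp (- \<theta>) > 0" "1 - exp (- \<theta>) > 0"
    using exp_gt_zero[of "- \<theta>"] by linarith+
  then have s1: "s1 * s1 = 2 * (1 + exp (- \<theta>))" and s2: "s2 * s2 = 2 * (1 - exp (- \<theta>))"
    unfolding s1_def s2_def by (simp_all del: real_sqrt_mult)
  have K: "psi_kernel \<theta> 0 x y
      = (exp (- \<theta> * x) + exp (- \<theta> * (1 - x))) * (exp (- \<theta> * y) + exp (- \<theta> * (1 - y)))
          / (s1 * s1)
      + (exp (- \<theta> * x) - exp (- \<theta> * (1 - x))) * (exp (- \<theta> * y) - exp (- \<theta> * (1 - y)))
          / (s2 * s2)" for y
    unfolding psi_kernel_def psi_index_0 by (simp add: psi_def s1_def s2_def)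
  have cancel: "A * c / (2 * c) = A / 2" if "c > 0" for A c :: real
    using that by simp
  define a where "a = exp (- \<theta> * x)"
  define b where "b = exp (- \<theta> * (1 - x))"
  have "psi_kernel \<theta> 0 x 0 = (a + b) * (1 + exp (- \<theta>)) / (2 * (1 + exp (- \<theta>)))
      + (a - b) * (1 - exp (- \<theta>)) / (2 * (1 - exp (- \<theta>)))"
    unfolding K s1 s2 a_def b_def by simp
  also have "\<dots> = a" unfolding cancel[OF pos(1)] cancel[OF pos(2)] by (simp add: field_simps)
  finally show "psi_kernel \<theta> 0 x 0 = exp (- \<theta> * x)" unfolding a_def .
  have "psi_kernel \<theta> 0 x 1 = (a + b) * (1 + exp (- \<theta>)) / (2 * (1 + exp (- \<theta>)))
      + (b - a) * (1 - exp (- \<theta>)) / (2 * (1 - exp (- \<theta>)))"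
    unfolding K s1 s2 a_def b_def by (simp add: algebra_simps)
  also have "\<dots> = b" unfolding cancel[OF pos(1)] cancel[OF pos(2)] by (simp add: field_simps)
  finally show "psi_kernel \<theta> 0 x 1 = exp (- \<theta> * (1 - x))" unfolding b_def .
qed

lemma psi_level_at_center:
  assumes "\<theta> > 0" "1 \<le> l"
  shows "psi \<theta> (l, m) x * psi \<theta> (l, m) (real m / 2 ^ l)
    = sinh_hat \<theta> (real m / 2 ^ l) (1 / 2 ^ l) x / cosh (\<theta> / 2 ^ l)"
proof -
  define h :: real where "h = 1 / 2 ^ l"
  define C where "C = sqrt (2 / sinh ((2 / 2 ^ l) * \<theta>))"
  have sinh_pos: "sinh (\<theta> * h) > 0" using assms(1) unfolding h_def by simp
  have "(2 / 2 ^ l) * \<theta> = 2 * (\<theta> * h)" unfolding h_def by simp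
  then have "2 / sinh ((2 / 2 ^ l) * \<theta>) = 1 / (sinh (\<theta> * h) * cosh (\<theta> * h))"
    by (simp add: sinh_double)
  then have C2: "C * C = 1 / (sinh (\<theta> * h) * cosh (\<theta> * h))"
    unfolding C_def using sinh_pos by (simp del: real_sqrt_mult)
  have "sinh_hat \<theta> (real m / 2 ^ l) h (real m / 2 ^ l) = sinh (\<theta> * h)"
    by (simp add: sinh_hat_left h_def)
  then have "psi \<theta> (l, m) x * psi \<theta> (l, m) (real m / 2 ^ l)
      = (C * C) * sinh (\<theta> * h) * sinh_hat \<theta> (real m / 2 ^ l) h x"
    unfolding psi_eq_sinh_hat[OF assms(2)] C_def[symmetric] h_def[symmetric] by simp
  also have "\<dots> = sinh_hat \<theta> (real m / 2 ^ l) h x / cosh (\<theta> * h)"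
    unfolding C2 using sinh_pos assms(1) by (simp add: h_def)
  finally show ?thesis unfolding h_def by simp
qed

lemma psi_kernel_grid:
  assumes "\<theta> > 0" "x \<in> {0..1}"
  shows "k \<le> 2 ^ n \<Longrightarrow> psi_kernel \<theta> n x (real k / 2 ^ n) = exp (- \<theta> * \<bar>x - real k / 2 ^ n\<bar>)"
proof (induction n arbitrary: k)
  case 0
  then have "k = 0 \<or> k = 1" by auto
  then show ?case using assms psi_kernel_0_ends[OF assms(1)] by auto
next
  case (Suc n)
  note level = psi_kernel_Suc[of \<theta> n x "real k / 2 ^ Suc n", unfolded psi_level_sum_grid]
  show ?case
  proof (cases "odd k")
    case False
    then obtain j where k: "k = 2 * j" by blast
    then have "j \<le> 2 ^ n" "real k / 2 ^ Suc n = real j / 2 ^ n" using Suc.prems by auto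
    then show ?thesis using level False Suc.IH by simp
  next
    case True
    then obtain j where k: "k = 2 * j + 1" by (blast elim: oddE)
    then have "j < 2 ^ n" using Suc.prems by simp
    define c where "c = real k / 2 ^ Suc n"
    define h :: real where "h = 1 / 2 ^ Suc n"
    have h: "h \<ge> 0" "c - h = real j / 2 ^ n" "c + h = real (Suc j) / 2 ^ n"
      unfolding c_def h_def k by (simp_all add: field_simps)
    have "hyperbolic_on \<theta> {c - h..c + h} (psi_kernel \<theta> n x)"
      unfolding h(2,3) psi_kernel_def[abs_def] by (intro hyperbolic_on_sum hyperbolic_on_psi_grid)
    then have "2 * cosh (\<theta> * h) * psi_kernel \<theta> n x c
        = psi_kernel \<theta> n x (c - h) + psi_kernel \<theta> n x (c + h)"
      using h(1) by (rule hyperbolic_on_midpoint)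
    also have "\<dots> = exp (- \<theta> * \<bar>x - (c - h)\<bar>) + exp (- \<theta> * \<bar>x - (c + h)\<bar>)"
      unfolding h(2,3) using Suc.IH[of j] Suc.IH[of "Suc j"] \<open>j < 2 ^ n\<close> by simp
    also have "\<dots> = 2 * cosh (\<theta> * h) * exp (- \<theta> * \<bar>x - c\<bar>) - 2 * sinh_hat \<theta> c h x"
      using exp_abs_three_point[OF h(1)] by simp
    finally have "psi_kernel \<theta> n x c = exp (- \<theta> * \<bar>x - c\<bar>) - sinh_hat \<theta> c h x / cosh (\<theta> * h)"
      by (simp add: field_simps)
    moreover have "psi \<theta> (Suc n, k) x * psi \<theta> (Suc n, k) c = sinh_hat \<theta> c h x / cosh (\<theta> * h)"
      unfolding c_def h_def using psi_level_at_center[OF assms(1), of "Suc n" k x] by simp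
    moreover have "k < 2 ^ Suc n" using Suc.prems \<open>j < 2 ^ n\<close> k by simp
    ultimately show ?thesis using level True unfolding c_def by simp
  qed
qed

section \<open>Independence of kernel translates\<close>

lemma exp_abs_translates_independent:
  fixes t v :: "nat \<Rightarrow> real"
  assumes "\<theta> \<noteq> 0" "strict_mono t"
  shows "(\<And>x. x \<in> {t 0..t n} \<Longrightarrow> (\<Sum>k\<le>n. v k * exp (- \<theta> * \<bar>x - t k\<bar>)) = 0)
    \<Longrightarrow> k \<le> n \<Longrightarrow> v k = 0"
proof (induction n arbitrary: k)
  case 0
  then show ?case by auto
next
  case (Suc n)
  define d where "d = (t (Suc n) - t n) / 2"
  have "t n < t (Suc n)" "t 0 \<le> t n"
    using assms(2) by (simp_all add: strict_mono_less strict_mono_less_eq)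
  then have "d > 0" "t 0 \<le> t (Suc n) - d" "t (Suc n) - d \<le> t (Suc n)"
    unfolding d_def by (simp_all add: field_simps)
  then have d: "d > 0" "t (Suc n) - d \<in> {t 0..t (Suc n)}" "t (Suc n) \<in> {t 0..t (Suc n)}"
    by auto
  define A where "A = (\<Sum>k\<le>n. v k * exp (\<theta> * t k))"
  have right_of_t_n: "(\<Sum>k\<le>n. v k * exp (- \<theta> * \<bar>x - t k\<bar>)) = exp (- \<theta> * x) * A" if "t n \<le> x" for x
  proof -
    have "v k * exp (- \<theta> * \<bar>x - t k\<bar>) = exp (- \<theta> * x) * (v k * exp (\<theta> * t k))" if "k \<le> n" for k
    proof -
      have "t k \<le> t n" using that by (simp add: strict_mono_less_eq[OF assms(2)])
      then have "\<bar>x - t k\<bar> = x - t k" using \<open>t n \<le> x\<close> by linarith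
      then show ?thesis by (simp add: algebra_simps flip: exp_add)
    qed
    then show ?thesis unfolding A_def sum_distrib_left by (intro sum.cong) auto
  qed
  have "exp (- \<theta> * t (Suc n)) * A + v (Suc n) = 0"
    using Suc.prems(1)[OF d(3)] right_of_t_n \<open>t n < t (Suc n)\<close> by simp
  then have at_t: "exp (- \<theta> * t (Suc n)) * A = - v (Suc n)" by linarith
  have "exp (- \<theta> * (t (Suc n) - d)) * A + v (Suc n) * exp (- \<theta> * d) = 0"
  proof -
    have "t n \<le> t (Suc n) - d" "\<bar>t (Suc n) - d - t (Suc n)\<bar> = d"
      using d(1) unfolding d_def by (auto simp: field_simps)
    then show ?thesis using Suc.prems(1)[OF d(2)] right_of_t_n by simp
  qed
  moreover have "exp (- \<theta> * (t (Suc n) - d)) * A = exp (\<theta> * d) * (exp (- \<theta> * t (Suc n)) * A)"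
    by (simp add: algebra_simps flip: exp_add)
  ultimately have "v (Suc n) * (exp (- \<theta> * d) - exp (\<theta> * d)) = 0"
    unfolding at_t by (simp add: algebra_simps)
  moreover have "exp (- \<theta> * d) \<noteq> exp (\<theta> * d)" using assms(1) d(1) by simp
  ultimately have vSuc: "v (Suc n) = 0" by simp
  have "(\<Sum>k\<le>n. v k * exp (- \<theta> * \<bar>x - t k\<bar>)) = 0" if "x \<in> {t 0..t n}" for x
    using Suc.prems(1)[of x] that \<open>t n < t (Suc n)\<close> vSuc by simp
  then show ?case using Suc.IH Suc.prems(2) vSuc le_Suc_eq by blast
qed

section \<open>Inverses, Gram factorizations and Gaussian vectors\<close>

lemma mat_inv_det_nonzero:
  fixes A :: "real mat"
  assumes A: "A \<in> carrier_mat n n" and "det A \<noteq> 0"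
  shows "invertible_mat A" "mat_inv A \<in> carrier_mat n n"
    and "A * mat_inv A = 1\<^sub>m n" "mat_inv A * A = 1\<^sub>m n"
proof -
  obtain B where B: "B \<in> carrier_mat n n" "A * B = 1\<^sub>m n" "B * A = 1\<^sub>m n"
    using det_non_zero_imp_unit[OF assms, of undefined] unfolding Units_def ring_mat_def by auto
  then have ex: "\<exists>B. inverts_mat A B \<and> inverts_mat B A"
    using A unfolding inverts_mat_def by auto
  then show "invertible_mat A" using A unfolding invertible_mat_def by auto
  have "inverts_mat A (mat_inv A) \<and> inverts_mat (mat_inv A) A"
    unfolding mat_inv_def by (rule someI_ex[OF ex])
  then have AB: "A * mat_inv A = 1\<^sub>m n" and BA: "mat_inv A * A = 1\<^sub>m (dim_row (mat_inv A))"
    using A unfolding inverts_mat_def by auto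
  have "dim_col (mat_inv A) = n" "dim_row (mat_inv A) = n"
    using arg_cong[OF AB, of dim_col] arg_cong[OF BA, of dim_col] A by auto
  then show "mat_inv A \<in> carrier_mat n n" "A * mat_inv A = 1\<^sub>m n" "mat_inv A * A = 1\<^sub>m n"
    using AB BA by auto
qed

lemma mat_inv_gram:
  fixes P :: "real mat"
  assumes P: "P \<in> carrier_mat n n" and "det P \<noteq> 0"
  shows "mat_inv (P * transpose_mat P) = mat_inv (transpose_mat P) * mat_inv P"
proof -
  have PT: "transpose_mat P \<in> carrier_mat n n" "det (transpose_mat P) \<noteq> 0"
    using assms by (simp_all add: det_transpose)
  note Pinv = mat_inv_det_nonzero[OF assms] and PTinv = mat_inv_det_nonzero[OF PT]
  define K where "K = P * transpose_mat P"
  define B where "B = mat_inv (transpose_mat P) * mat_inv P"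
  have K: "K \<in> carrier_mat n n" "det K \<noteq> 0"
    unfolding K_def using assms PT by (auto simp: det_mult[OF P PT(1)])
  note Kinv = mat_inv_det_nonzero[OF K]
  have B: "B \<in> carrier_mat n n" unfolding B_def using Pinv PTinv by auto
  have "K * B = P * (transpose_mat P * B)"
    unfolding K_def by (rule assoc_mult_mat[OF P PT(1) B])
  also have "transpose_mat P * B = (transpose_mat P * mat_inv (transpose_mat P)) * mat_inv P"
    unfolding B_def by (rule assoc_mult_mat[OF PT(1) PTinv(2) Pinv(2), symmetric])
  also have "\<dots> = mat_inv P" using PTinv(3) Pinv(2) by simp
  also have "P * mat_inv P = 1\<^sub>m n" by (rule Pinv(3))
  finally have KB: "K * B = 1\<^sub>m n" .
  have "mat_inv K = mat_inv K * (K * B)" using KB Kinv(2) by simp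
  also have "\<dots> = (mat_inv K * K) * B" by (rule assoc_mult_mat[OF Kinv(2) K(1) B, symmetric])
  also have "\<dots> = B" using Kinv(4) B by simp
  finally show ?thesis unfolding K_def B_def .
qed

lemma mat_inv_cancel_right:
  fixes Q :: "real mat"
  assumes "B \<in> carrier_mat m n" "Q \<in> carrier_mat n n" "det Q \<noteq> 0"
  shows "B * Q * mat_inv Q = B"
  using assms mat_inv_det_nonzero[OF assms(2,3)] by simp

lemma mat_inv_gram_mult_vec:
  fixes P :: "real mat"
  assumes P: "P \<in> carrier_mat n n" "det P \<noteq> 0"
    and k: "k \<in> carrier_mat m n" and f: "f \<in> carrier_vec n"
  shows "k * mat_inv (P * transpose_mat P) *\<^sub>v f
    = (k * mat_inv (transpose_mat P)) *\<^sub>v (mat_inv P *\<^sub>v f)"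
proof -
  have PT: "transpose_mat P \<in> carrier_mat n n" "det (transpose_mat P) \<noteq> 0"
    using P by (simp_all add: det_transpose)
  note Pinv = mat_inv_det_nonzero[OF P] and PTinv = mat_inv_det_nonzero[OF PT]
  have "k * mat_inv (P * transpose_mat P) = (k * mat_inv (transpose_mat P)) * mat_inv P"
    unfolding mat_inv_gram[OF P] by (rule assoc_mult_mat[OF k PTinv(2) Pinv(2), symmetric])
  also have "\<dots> *\<^sub>v f = (k * mat_inv (transpose_mat P)) *\<^sub>v (mat_inv P *\<^sub>v f)"
    by (rule assoc_mult_mat_vec[OF mult_carrier_mat[OF k PTinv(2)] Pinv(2) f])
  finally show ?thesis .
qed

lemma centered_mvn_linear_image:
  fixes A :: "real mat"
  assumes X: "centered_mvn \<Omega> X n \<Sigma>" and A: "A \<in> carrier_mat m n" and \<Sigma>: "\<Sigma> \<in> carrier_mat n n"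
  shows "centered_mvn \<Omega> (\<lambda>\<omega>. A *\<^sub>v X \<omega>) m (A * \<Sigma> * transpose_mat A)"
  unfolding centered_mvn_def
proof (intro conjI allI impI ballI)
  fix \<omega> show "dim_vec (A *\<^sub>v X \<omega>) = m" using A by simp
next
  fix a :: "real vec" assume "dim_vec a = m"
  then have a: "a \<in> carrier_vec m" by (rule carrier_vecI)
  define b where "b = transpose_mat A *\<^sub>v a"
  have b: "b \<in> carrier_vec n" unfolding b_def by (rule carrier_vecI) (use A in simp)
  have Xb: "(\<lambda>\<omega>. b \<bullet> X \<omega>) \<in> borel_measurable \<Omega>"
    "distr \<Omega> borel (\<lambda>\<omega>. b \<bullet> X \<omega>) = normal_measure 0 (b \<bullet> (\<Sigma> *\<^sub>v b))"
    using X b unfolding centered_mvn_def by auto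
  have same: "a \<bullet> (A *\<^sub>v X \<omega>) = b \<bullet> X \<omega>" if "\<omega> \<in> space \<Omega>" for \<omega>
  proof -
    have "X \<omega> \<in> carrier_vec n" using X that unfolding centered_mvn_def by (auto intro: carrier_vecI)
    then show ?thesis unfolding b_def by (rule transpose_vec_mult_scalar[OF A _ a, symmetric])
  qed
  have AT: "transpose_mat A \<in> carrier_mat n m" using A by simp
  have "(A * \<Sigma> * transpose_mat A) *\<^sub>v a = (A * \<Sigma>) *\<^sub>v b"
    unfolding b_def by (rule assoc_mult_mat_vec[OF mult_carrier_mat[OF A \<Sigma>] AT a])
  also have "\<dots> = A *\<^sub>v (\<Sigma> *\<^sub>v b)" by (rule assoc_mult_mat_vec[OF A \<Sigma> b])
  finally have "a \<bullet> ((A * \<Sigma> * transpose_mat A) *\<^sub>v a) = a \<bullet> (A *\<^sub>v (\<Sigma> *\<^sub>v b))" by simp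
  also have "\<dots> = b \<bullet> (\<Sigma> *\<^sub>v b)"
    unfolding b_def using mult_mat_vec_carrier[OF \<Sigma> b, unfolded b_def]
    by (intro transpose_vec_mult_scalar[OF A _ a, symmetric])
  finally have var: "a \<bullet> ((A * \<Sigma> * transpose_mat A) *\<^sub>v a) = b \<bullet> (\<Sigma> *\<^sub>v b)" .
  show "(\<lambda>\<omega>. a \<bullet> (A *\<^sub>v X \<omega>)) \<in> borel_measurable \<Omega>"
    using Xb(1) by (simp add: measurable_cong[OF same])
  show "distr \<Omega> borel (\<lambda>\<omega>. a \<bullet> (A *\<^sub>v X \<omega>))
    = normal_measure 0 (a \<bullet> ((A * \<Sigma> * transpose_mat A) *\<^sub>v a))"
    unfolding var Xb(2)[symmetric] by (rule distr_cong) (simp_all add: same)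
qed

lemma centered_mvn_whiten:
  fixes P :: "real mat"
  assumes X: "centered_mvn \<Omega> X n (P * transpose_mat P)" and P: "P \<in> carrier_mat n n" "det P \<noteq> 0"
  shows "centered_mvn \<Omega> (\<lambda>\<omega>. mat_inv P *\<^sub>v X \<omega>) n (1\<^sub>m n)"
proof -
  note Pinv = mat_inv_det_nonzero[OF P]
  have "transpose_mat P * transpose_mat (mat_inv P) = 1\<^sub>m n"
    using transpose_mult[OF Pinv(2) P(1)] Pinv(4) by simp
  moreover have "mat_inv P * (P * transpose_mat P) = transpose_mat P"
    using assoc_mult_mat[OF Pinv(2) P(1) transpose_carrier_mat[THEN iffD2, OF P(1)], symmetric]
      Pinv(4) P(1)
    by simp
  ultimately have "mat_inv P * (P * transpose_mat P) * transpose_mat (mat_inv P) = 1\<^sub>m n"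
    by simp
  then show ?thesis
    using centered_mvn_linear_image[OF X Pinv(2)] P by simp
qed

definition psi_matrix :: "real \<Rightarrow> nat \<Rightarrow> (nat \<Rightarrow> nat \<times> nat) \<Rightarrow> real mat" where
  "psi_matrix \<theta> L \<sigma> = mat (nU L) (nU L) (\<lambda>(k, i). psi \<theta> (\<sigma> i) (ipt L k))"

definition psi_row :: "real \<Rightarrow> nat \<Rightarrow> (nat \<Rightarrow> nat \<times> nat) \<Rightarrow> real \<Rightarrow> real mat" where
  "psi_row \<theta> L \<sigma> x = mat 1 (nU L) (\<lambda>(_, i). psi \<theta> (\<sigma> i) x)"

lemma ipt_in_unit_interval: "k < nU L \<Longrightarrow> ipt L k \<in> {0..1}"
  unfolding ipt_def nU_def by (simp add: field_simps)

lemma psi_kernel_expansion_ipt: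
  assumes "\<theta> > 0" "bij_betw \<sigma> {..<nU L} (psi_index L)" "x \<in> {0..1}" "k < nU L"
  shows "(\<Sum>i<nU L. psi \<theta> (\<sigma> i) x * psi \<theta> (\<sigma> i) (ipt L k)) = expK \<theta> x (ipt L k)"
proof -
  have "(\<Sum>i<nU L. psi \<theta> (\<sigma> i) x * psi \<theta> (\<sigma> i) (ipt L k)) = psi_kernel \<theta> L x (ipt L k)"
    unfolding psi_kernel_def by (rule sum.reindex_bij_betw[OF assms(2)])
  also have "\<dots> = expK \<theta> x (ipt L k)"
    using psi_kernel_grid[OF assms(1,3), of k L] assms(4) unfolding ipt_def expK_def nU_def by simp
  finally show ?thesis .
qed

lemma KxU_eq_psi_row_mult:
  assumes "\<theta> > 0" "bij_betw \<sigma> {..<nU L} (psi_index L)" "x \<in> {0..1}"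
  shows "KxU \<theta> L x = psi_row \<theta> L \<sigma> x * transpose_mat (psi_matrix \<theta> L \<sigma>)"
  by (rule eq_matI)
    (auto simp: KxU_def psi_row_def psi_matrix_def scalar_prod_def atLeast0LessThan
      psi_kernel_expansion_ipt[OF assms])

lemma KUU_eq_psi_matrix_gram:
  assumes "\<theta> > 0" "bij_betw \<sigma> {..<nU L} (psi_index L)"
  shows "KUU \<theta> L = psi_matrix \<theta> L \<sigma> * transpose_mat (psi_matrix \<theta> L \<sigma>)"
  by (rule eq_matI)
    (auto simp: KUU_def psi_matrix_def scalar_prod_def atLeast0LessThan
      psi_kernel_expansion_ipt[OF assms ipt_in_unit_interval])

lemma det_psi_matrix_nonzero:
  assumes "\<theta> > 0" "bij_betw \<sigma> {..<nU L} (psi_index L)"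
  shows "det (psi_matrix \<theta> L \<sigma>) \<noteq> 0"
proof -
  define P where "P = psi_matrix \<theta> L \<sigma>"
  have P: "P \<in> carrier_mat (nU L) (nU L)" "transpose_mat P \<in> carrier_mat (nU L) (nU L)"
    unfolding P_def psi_matrix_def by auto
  have "v = 0\<^sub>v (nU L)" if v: "v \<in> carrier_vec (nU L)" "transpose_mat P *\<^sub>v v = 0\<^sub>v (nU L)" for v
  proof -
    have "(\<Sum>k\<le>2 ^ L. v $ k * exp (- \<theta> * \<bar>x - real k / 2 ^ L\<bar>)) = 0" if x: "x \<in> {0..1}" for x
    proof -
      have "KxU \<theta> L x *\<^sub>v v = psi_row \<theta> L \<sigma> x *\<^sub>v (transpose_mat P *\<^sub>v v)"
        unfolding KxU_eq_psi_row_mult[OF assms x] P_def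
        by (rule assoc_mult_mat_vec[OF _ P(2)[unfolded P_def] v(1)])
          (unfold psi_row_def, rule mat_carrier)
      then have "(KxU \<theta> L x *\<^sub>v v) $ 0 = 0" unfolding v(2) by (simp add: psi_row_def)
      then show ?thesis
        using v(1) by (simp add: KxU_def scalar_prod_def expK_def ipt_def nU_def mult.commute
          atLeast0LessThan lessThan_Suc_atMost)
    qed
    then have "\<forall>k\<le>2 ^ L. v $ k = 0"
      using exp_abs_translates_independent[of \<theta> "\<lambda>k. real k / 2 ^ L" "2 ^ L" "\<lambda>k. v $ k"] assms(1)
      by (simp add: strict_mono_def divide_strict_right_mono)
    then show ?thesis using v(1) unfolding nU_def by (intro eq_vecI) auto
  qed
  then have "det (transpose_mat P) \<noteq> 0" using det_0_iff_vec_prod_zero[OF P(2)] by auto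
  then show ?thesis using det_transpose[OF P(1)] unfolding P_def by simp
qed

lemma centered_GP_ipt:
  assumes "centered_GP \<Omega> f (expK \<theta>)"
  shows "centered_mvn \<Omega> (\<lambda>\<omega>. fU L (f \<omega>)) (nU L) (KUU \<theta> L)"
proof -
  define ts where "ts = map (ipt L) [0..<nU L]"
  have "set ts \<subseteq> {0..1}" using ipt_in_unit_interval by (auto simp: ts_def)
  then have "centered_mvn \<Omega> (\<lambda>\<omega>. vec (length ts) (\<lambda>i. f \<omega> (ts ! i))) (length ts)
      (mat (length ts) (length ts) (\<lambda>(i, j). expK \<theta> (ts ! i) (ts ! j)))"
    using assms unfolding centered_GP_def by blast
  moreover have "vec (length ts) (\<lambda>i. f \<omega> (ts ! i)) = fU L (f \<omega>)" for \<omega>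
    unfolding fU_def ts_def by (intro eq_vecI) auto
  moreover have "mat (length ts) (length ts) (\<lambda>(i, j). expK \<theta> (ts ! i) (ts ! j)) = KUU \<theta> L"
    unfolding KUU_def ts_def by (intro eq_matI) auto
  moreover have "length ts = nU L" by (simp add: ts_def)
  ultimately show ?thesis by simp
qed

theorem theorem1:
  fixes \<theta> :: real and L :: nat
  assumes "\<theta> > 0" and "L \<ge> 1"
  shows "\<exists>P. P \<in> carrier_mat (nU L) (nU L) \<and> invertible_mat P \<and>
           KUU \<theta> L = P * transpose_mat P \<and>
           (\<exists>\<sigma>. bij_betw \<sigma> {..<nU L} (psi_index L) \<and>
              (\<forall>x\<in>{0..1}. \<forall>i<nU L.
                 (KxU \<theta> L x * mat_inv (transpose_mat P)) $$ (0, i) = psi \<theta> (\<sigma> i) x)) \<and>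
           (\<forall>f. \<forall>x\<in>{0..1}.
              KxU \<theta> L x * mat_inv (KUU \<theta> L) *\<^sub>v fU L f
              = (KxU \<theta> L x * mat_inv (transpose_mat P)) *\<^sub>v (mat_inv P *\<^sub>v fU L f)) \<and>
           (\<forall>(\<Omega> :: 'w measure) f. prob_space \<Omega> \<longrightarrow> centered_GP \<Omega> f (expK \<theta>) \<longrightarrow>
              centered_mvn \<Omega> (\<lambda>\<omega>. mat_inv P *\<^sub>v fU L (f \<omega>)) (nU L) (1\<^sub>m (nU L)))
         \<and> (\<forall>l m. 1 \<le> l \<and> odd m \<and> m < 2 ^ l \<longrightarrow>
              (\<forall>x\<in>{0..1}. x \<notin> {(real m - 1) / 2 ^ l .. (real m + 1) / 2 ^ l} \<longrightarrow> psi \<theta> (l, m) x = 0))"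
proof -
  obtain \<sigma> where \<sigma>: "bij_betw \<sigma> {..<nU L} (psi_index L)"
    using finite_same_card_bij[of "{..<nU L}" "psi_index L"] finite_psi_index card_psi_index by auto
  define P where "P = psi_matrix \<theta> L \<sigma>"
  have P: "P \<in> carrier_mat (nU L) (nU L)" "det P \<noteq> 0"
    unfolding P_def using det_psi_matrix_nonzero[OF assms(1) \<sigma>] by (auto simp: psi_matrix_def)
  have KUU: "KUU \<theta> L = P * transpose_mat P"
    unfolding P_def by (rule KUU_eq_psi_matrix_gram[OF assms(1) \<sigma>])
  have phi: "KxU \<theta> L x * mat_inv (transpose_mat P) = psi_row \<theta> L \<sigma> x" if "x \<in> {0..1}" for x
    unfolding KxU_eq_psi_row_mult[OF assms(1) \<sigma> that] P_def[symmetric] using P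
    by (intro mat_inv_cancel_right) (auto simp: psi_row_def det_transpose)
  show ?thesis
  proof (intro exI[of _ P] conjI)
    show "\<exists>\<sigma>. bij_betw \<sigma> {..<nU L} (psi_index L) \<and>
        (\<forall>x\<in>{0..1}. \<forall>i<nU L. (KxU \<theta> L x * mat_inv (transpose_mat P)) $$ (0, i) = psi \<theta> (\<sigma> i) x)"
      using \<sigma> phi by (auto simp: psi_row_def)
    show "\<forall>f. \<forall>x\<in>{0..1}. KxU \<theta> L x * mat_inv (KUU \<theta> L) *\<^sub>v fU L f
        = (KxU \<theta> L x * mat_inv (transpose_mat P)) *\<^sub>v (mat_inv P *\<^sub>v fU L f)"
      unfolding KUU using P by (auto intro!: mat_inv_gram_mult_vec simp: KxU_def fU_def)
    show "\<forall>(\<Omega> :: 'w measure) f. prob_space \<Omega> \<longrightarrow> centered_GP \<Omega> f (expK \<theta>) \<longrightarrow>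
        centered_mvn \<Omega> (\<lambda>\<omega>. mat_inv P *\<^sub>v fU L (f \<omega>)) (nU L) (1\<^sub>m (nU L))"
      using centered_mvn_whiten[OF centered_GP_ipt[of _ _ \<theta> L, unfolded KUU] P] by blast
  qed (use P KUU mat_inv_det_nonzero psi_eq_0_outside in auto)
qed

end
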